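(* Let $G$ be the non-abelian group of order $27$ and exponent $3$, and let $U_1$, $U_2$ be short $3$-sequences over $G$, neither of central type. Then: (a) if the terms of $U_1\cdot U_2$ lie in four distinct non-central $z$-classes, then $U_1\cdot U_2$ is an EGZ sequence; (b) if the terms of $U_1\cdot U_2$ lie in at least two distinct non-central $z$-classes and at least one of $U_1,U_2$ is of thick type, then $U_1\cdot U_2$ is an EGZ sequence; (c) moreover, if $g_1,g_2,g_3,g_4\in G\setminus Z(G)$ and $u\in Z(G)$ are such that $g_1$ and $g_3$ lie in distinct $z$-classes and $g_1g_2,\ g_3g_4\in Z(G)$, then there is a permutation $\sigma$ of $\{1,2,3,4\}$ with $g_{\sigma(1)}g_{\sigma(2)}g_{\sigma(3)}g_{\sigma(4)}u=1$.
   Context: $G$ is the Heisenberg group of order $27$ and exponent $3$; $Z(G)=[G,G]$ has order $3$. For $g\in G\setminus Z(G)$ its $z$-class is $\mathcal{K}[g]=\{g^\lambda u: \lambda\in\{1,2\},\ u\in Z(G)\}=C_G(g)\setminus Z(G)$; there are four non-central $z$-classes. Sequences are finite unordered multisets of elements; $U_1\cdot U_2$ denotes concatenation. A sequence $g_1\cdot\dotsc\cdot g_\ell$ has central product if $g_1\cdots g_\ell\in Z(G)$ (independent of ordering). A short $3$-sequence is a sequence $x_1\cdot x_2\cdot x_3$ with $x_1x_2x_3\in Z(G)$; it is of central type if all $x_i\in Z(G)$; thin type if exactly two terms are non-central; thick type A if all three terms are non-central and pairwise conjugate; thick type B if all three are non-central and it is not thick type A; thick type means thick type A or B. An EGZ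 sequence is a sequence $T$ with central product containing three terms which can be labelled $h_1,h_2,h_3$ so that $h_3$ commutes with none of $h_1$, $h_2$, $h_1h_2$. *)

theory Defs
  imports "HOL-Algebra.Group" "HOL-Library.Multiset" "HOL-Combinatorics.Permutations"
begin

definition center :: "('a, 'b) monoid_scheme \<Rightarrow> 'a set" where
  "center G = {z \<in> carrier G. \<forall>x \<in> carrier G. z \<otimes>\<^bsub>G\<^esub> x = x \<otimes>\<^bsub>G\<^esub> z}"

definition commute :: "('a, 'b) monoid_scheme \<Rightarrow> 'a \<Rightarrow> 'a \<Rightarrow> bool" where
  "commute G x y \<longleftrightarrow> x \<otimes>\<^bsub>G\<^esub> y = y \<otimes>\<^bsub>G\<^esub> x"

definition conjugate :: "('a, 'b) monoid_scheme \<Rightarrow> 'a \<Rightarrow> 'a \<Rightarrow> bool" where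
  "conjugate G x y \<longleftrightarrow> (\<exists>h \<in> carrier G. y = h \<otimes>\<^bsub>G\<^esub> x \<otimes>\<^bsub>G\<^esub> inv\<^bsub>G\<^esub> h)"

definition zclass :: "('a, 'b) monoid_scheme \<Rightarrow> 'a \<Rightarrow> 'a set" where
  "zclass G g = {g [^]\<^bsub>G\<^esub> (l::nat) \<otimes>\<^bsub>G\<^esub> u | l u. l \<in> {1, 2} \<and> u \<in> center G}"

definition list_prod :: "('a, 'b) monoid_scheme \<Rightarrow> 'a list \<Rightarrow> 'a" where
  "list_prod G xs = foldr (\<lambda>x y. x \<otimes>\<^bsub>G\<^esub> y) xs \<one>\<^bsub>G\<^esub>"

definition is_seq :: "('a, 'b) monoid_scheme \<Rightarrow> 'a multiset \<Rightarrow> bool" where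
  "is_seq G T \<longleftrightarrow> set_mset T \<subseteq> carrier G"

definition central_product :: "('a, 'b) monoid_scheme \<Rightarrow> 'a multiset \<Rightarrow> bool" where
  "central_product G T \<longleftrightarrow> (\<forall>xs. mset xs = T \<longrightarrow> list_prod G xs \<in> center G)"

definition short3 :: "('a, 'b) monoid_scheme \<Rightarrow> 'a multiset \<Rightarrow> bool" where
  "short3 G U \<longleftrightarrow> is_seq G U \<and>
     (\<exists>x1 x2 x3. U = {#x1, x2, x3#} \<and> x1 \<otimes>\<^bsub>G\<^esub> x2 \<otimes>\<^bsub>G\<^esub> x3 \<in> center G)"

definition central_type :: "('a, 'b) monoid_scheme \<Rightarrow> 'a multiset \<Rightarrow> bool" where
  "central_type G U \<longleftrightarrow> short3 G U \<and> set_mset U \<subseteq> center G"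

definition thin_type :: "('a, 'b) monoid_scheme \<Rightarrow> 'a multiset \<Rightarrow> bool" where
  "thin_type G U \<longleftrightarrow> short3 G U \<and> size (filter_mset (\<lambda>x. x \<notin> center G) U) = 2"

definition thick_A :: "('a, 'b) monoid_scheme \<Rightarrow> 'a multiset \<Rightarrow> bool" where
  "thick_A G U \<longleftrightarrow> short3 G U \<and> (\<forall>x \<in># U. x \<notin> center G) \<and>
     (\<forall>x \<in># U. \<forall>y \<in># U. conjugate G x y)"

definition thick_B :: "('a, 'b) monoid_scheme \<Rightarrow> 'a multiset \<Rightarrow> bool" where
  "thick_B G U \<longleftrightarrow> short3 G U \<and> (\<forall>x \<in># U. x \<notin> center G) \<and> \<not> thick_A G U"

definition thick_type :: "('a, 'b) monoid_scheme \<Rightarrow> 'a multiset \<Rightarrow> bool" where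
  "thick_type G U \<longleftrightarrow> thick_A G U \<or> thick_B G U"

definition EGZ :: "('a, 'b) monoid_scheme \<Rightarrow> 'a multiset \<Rightarrow> bool" where
  "EGZ G T \<longleftrightarrow> is_seq G T \<and> central_product G T \<and>
     (\<exists>h1 h2 h3. {#h1, h2, h3#} \<subseteq># T \<and>
        \<not> commute G h3 h1 \<and> \<not> commute G h3 h2 \<and> \<not> commute G h3 (h1 \<otimes>\<^bsub>G\<^esub> h2))"

definition nc_zclasses :: "('a, 'b) monoid_scheme \<Rightarrow> 'a multiset \<Rightarrow> 'a set set" where
  "nc_zclasses G T = zclass G ` {x \<in> set_mset T. x \<notin> center G}"

end

theory Submission
  imports Defs
begin

text \<open>
  Choose non-commuting a, b and let c = [a, b]. In exponent 3 the commutator c is central, so every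
  element is a^i b^j c^k and, with exponents read modulo 3, (i, j, k) (i', j', k') =
  (i + i', j + j', k + k' + 2 i' j). Hence g and h commute iff their (i, j)-parts are parallel in
  F_3^2, the centre is i = j = 0, and the four non-central z-classes are the four lines through the
  origin. For (a), two terms h1, h2 from different z-classes make h1 h2 lie on a third line, and
  the fourth z-class supplies h3. For (b), the terms of a thick U1 either lie on one line, and any
  term on another line serves as h3, or on three lines, and a finite check over F_3 finds the
  triple. For (c), the products g1 g2 g3 g4, g1 g3 g2 g4 and g4 g2 g3 g1 are central, and because
  g1 and g3 do not commute their c-exponents are pairwise different modulo 3; so one of them is
  the inverse of u.
\<close>

section \<open>Arithmetic modulo 3\<close>

lemma less_3_cases: "x < (3::nat) \<Longrightarrow> x = 0 \<or> x = 1 \<or> x = 2"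
  by arith

lemma mod_3_cases: "(x::nat) mod 3 = 0 \<or> x mod 3 = 1 \<or> x mod 3 = 2"
  by arith

lemma add_double_mod_3: "((s::nat) + 2 * P) mod 3 = (s mod 3 + 2 * (P mod 3)) mod 3"
  by (metis mod_add_eq mod_add_right_eq mod_mult_right_eq)

lemma add_double_mod_3_cancel: "((s::nat) + 2 * P) mod 3 = (s + 2 * Q) mod 3 \<longleftrightarrow> P mod 3 = Q mod 3"
  unfolding add_double_mod_3 [of s P] add_double_mod_3 [of s Q]
  using mod_3_cases [of s] mod_3_cases [of P] mod_3_cases [of Q] by (elim disjE; simp)

lemma neg_mod_3:
  assumes "x < 3" and "y < 3" and "((x::nat) + y) mod 3 = 0" shows "y = (3 - x) mod 3"
  using assms(3) less_3_cases [OF assms(1)] less_3_cases [OF assms(2)] by (elim disjE; simp)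

lemma third_summand_mod_3:
  assumes "x < 3" and "y < 3" and "z < 3" and "((x + y) mod 3 + (z::nat)) mod 3 = 0"
  shows "z = (6 - x - y) mod 3"
  using assms(4) less_3_cases [OF assms(1)] less_3_cases [OF assms(2)] less_3_cases [OF assms(3)]
  by (elim disjE; simp)

definition parallel3 :: "nat \<Rightarrow> nat \<Rightarrow> nat \<Rightarrow> nat \<Rightarrow> bool" where
  "parallel3 i j i' j' \<longleftrightarrow> (i' * j) mod 3 = (i * j') mod 3"

lemma parallel3_cases:
  assumes "i < 3" "j < 3" "i' < 3" "j' < 3" "\<not> (i = 0 \<and> j = 0)" "\<not> (i' = 0 \<and> j' = 0)"
    and "parallel3 i j i' j'"
  shows "(i' = i \<and> j' = j) \<or> (i' = (2 * i) mod 3 \<and> j' = (2 * j) mod 3)"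
  using assms(5-7) less_3_cases [OF assms(1)] less_3_cases [OF assms(2)]
    less_3_cases [OF assms(3)] less_3_cases [OF assms(4)]
  unfolding parallel3_def by (elim disjE; simp)

text \<open>The coordinate form of: h3 commutes with none of h1, h2, h1 h2.\<close>

definition egz_coords :: "nat \<Rightarrow> nat \<Rightarrow> nat \<Rightarrow> nat \<Rightarrow> nat \<Rightarrow> nat \<Rightarrow> bool" where
  "egz_coords i1 j1 i2 j2 i3 j3 \<longleftrightarrow> \<not> parallel3 i3 j3 i1 j1 \<and> \<not> parallel3 i3 j3 i2 j2 \<and>
     \<not> parallel3 i3 j3 ((i1 + i2) mod 3) ((j1 + j2) mod 3)"

lemma egz_coords_among_seven:
  assumes "i1 < 3" "j1 < 3" "i2 < 3" "j2 < 3" "i < 3" "j < 3"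
    and "\<not> (i1 = 0 \<and> j1 = 0)" "\<not> (i2 = 0 \<and> j2 = 0)" "\<not> (i = 0 \<and> j = 0)"
    and "\<not> parallel3 i1 j1 i2 j2"
    and "i3 = (6 - i1 - i2) mod 3" "j3 = (6 - j1 - j2) mod 3"
  shows "egz_coords i1 j1 i2 j2 i j \<or> egz_coords i1 j1 i j i2 j2 \<or> egz_coords i2 j2 i j i3 j3 \<or>
    egz_coords i3 j3 i j i1 j1 \<or> egz_coords i j i2 j2 i3 j3 \<or> egz_coords i j i3 j3 i1 j1 \<or>
    egz_coords i j i1 j1 i2 j2"
  using assms(7-) less_3_cases [OF assms(1)] less_3_cases [OF assms(2)]
    less_3_cases [OF assms(3)] less_3_cases [OF assms(4)]
    less_3_cases [OF assms(5)] less_3_cases [OF assms(6)]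
  unfolding egz_coords_def parallel3_def by (elim disjE; simp)

text \<open>
  With g2 = g1^-1 and g4 = g3^-1 modulo the centre, these are the c-exponents of g1 g2 g3 g4,
  g1 g3 g2 g4 and g4 g2 g3 g1, up to a common summand and a factor 2.
\<close>

lemma c_exponents_distinct:
  fixes i1 j1 i3 j3 :: nat
  assumes "i1 < 3" "j1 < 3" "i3 < 3" "j3 < 3" and "\<not> parallel3 i1 j1 i3 j3"
  defines "i2 \<equiv> (3 - i1) mod 3" and "j2 \<equiv> (3 - j1) mod 3"
    and "i4 \<equiv> (3 - i3) mod 3" and "j4 \<equiv> (3 - j3) mod 3"
  shows "(i2*j1 + i3*(j1+j2) + i4*(j1+j2+j3)) mod 3 \<noteq> (i3*j1 + i2*(j1+j3) + i4*(j1+j3+j2)) mod 3"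
    and "(i2*j1 + i3*(j1+j2) + i4*(j1+j2+j3)) mod 3 \<noteq> (i2*j4 + i3*(j4+j2) + i1*(j4+j2+j3)) mod 3"
    and "(i3*j1 + i2*(j1+j3) + i4*(j1+j3+j2)) mod 3 \<noteq> (i2*j4 + i3*(j4+j2) + i1*(j4+j2+j3)) mod 3"
  using assms(5) less_3_cases [OF assms(1)] less_3_cases [OF assms(2)]
    less_3_cases [OF assms(3)] less_3_cases [OF assms(4)]
  unfolding i2_def j2_def i4_def j4_def parallel3_def by (elim disjE; simp)+

lemma mod_3_hit_by_one_of_three:
  fixes x y z r :: nat
  assumes "x < 3" "y < 3" "z < 3" "r < 3" and "x \<noteq> y" "x \<noteq> z" "y \<noteq> z"
  shows "(r + 2 * x) mod 3 = 0 \<or> (r + 2 * y) mod 3 = 0 \<or> (r + 2 * z) mod 3 = 0"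
  using assms(5-7) less_3_cases [OF assms(1)] less_3_cases [OF assms(2)]
    less_3_cases [OF assms(3)] less_3_cases [OF assms(4)]
  by (elim disjE; simp)

lemma one_of_three_orderings:
  fixes i1 j1 i2 j2 i3 j3 i4 j4 K :: nat
  assumes "i1 < 3" "j1 < 3" "i2 < 3" "j2 < 3" "i3 < 3" "j3 < 3" "i4 < 3" "j4 < 3"
    and "(i1 + i2) mod 3 = 0" "(j1 + j2) mod 3 = 0" "(i3 + i4) mod 3 = 0" "(j3 + j4) mod 3 = 0"
    and "\<not> parallel3 i1 j1 i3 j3"
  shows "(K + 2 * (i2*j1 + i3*(j1+j2) + i4*(j1+j2+j3))) mod 3 = 0 \<or>
    (K + 2 * (i3*j1 + i2*(j1+j3) + i4*(j1+j3+j2))) mod 3 = 0 \<or>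
    (K + 2 * (i2*j4 + i3*(j4+j2) + i1*(j4+j2+j3))) mod 3 = 0"
proof -
  have neg: "i2 = (3 - i1) mod 3" "j2 = (3 - j1) mod 3" "i4 = (3 - i3) mod 3" "j4 = (3 - j3) mod 3"
    using assms(1-12) by (simp_all add: neg_mod_3)
  define x where "x = i2*j1 + i3*(j1+j2) + i4*(j1+j2+j3)"
  define y where "y = i3*j1 + i2*(j1+j3) + i4*(j1+j3+j2)"
  define z where "z = i2*j4 + i3*(j4+j2) + i1*(j4+j2+j3)"
  have "x mod 3 \<noteq> y mod 3" "x mod 3 \<noteq> z mod 3" "y mod 3 \<noteq> z mod 3"
    using c_exponents_distinct [OF assms(1,2,5,6,13)] unfolding x_def y_def z_def neg by simp_all
  then have "(K mod 3 + 2 * (x mod 3)) mod 3 = 0 \<or> (K mod 3 + 2 * (y mod 3)) mod 3 = 0 \<or>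
      (K mod 3 + 2 * (z mod 3)) mod 3 = 0"
    by (intro mod_3_hit_by_one_of_three) simp_all
  then show ?thesis
    unfolding x_def [symmetric] y_def [symmetric] z_def [symmetric] add_double_mod_3 [of K] .
qed


section \<open>Groups of exponent 3\<close>

lemma (in group) mult_inv_cancel_left [simp]:
  "x \<in> carrier G \<Longrightarrow> y \<in> carrier G \<Longrightarrow> x \<otimes> (inv x \<otimes> y) = y"
  by (simp add: m_assoc [symmetric])

lemma (in group) inv_mult_cancel_left [simp]:
  "x \<in> carrier G \<Longrightarrow> y \<in> carrier G \<Longrightarrow> inv x \<otimes> (x \<otimes> y) = y"
  by (simp add: m_assoc [symmetric])

lemma (in group) mult_not_central_if_not_commute:
  assumes g: "g \<in> carrier G" and h: "h \<in> carrier G" and "g \<otimes> h \<noteq> h \<otimes> g"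
  shows "g \<otimes> h \<notin> center G"
proof
  assume "g \<otimes> h \<in> center G"
  then have "g \<otimes> (h \<otimes> g) = g \<otimes> (g \<otimes> h)"
    using g h unfolding center_def by (auto simp: m_assoc)
  with g h \<open>g \<otimes> h \<noteq> h \<otimes> g\<close> show False by simp
qed

locale exponent3_group = group G for G :: "('a, 'b) monoid_scheme" (structure) +
  assumes pow_three: "x \<in> carrier G \<Longrightarrow> x [^] (3::nat) = \<one>"
begin

lemma cube_eq_one: "x \<in> carrier G \<Longrightarrow> x \<otimes> x \<otimes> x = \<one>"
  using pow_three by (simp add: numeral_3_eq_3)

lemma square_eq_inv: "x \<in> carrier G \<Longrightarrow> x \<otimes> x = inv x"
  by (metis cube_eq_one inv_equality m_closed m_assoc)

lemma pow_mod_3: "x \<in> carrier G \<Longrightarrow> x [^] (n::nat) = x [^] (n mod 3)"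
proof -
  assume x: "x \<in> carrier G"
  have "x [^] n = (x [^] (3::nat)) [^] (n div 3) \<otimes> x [^] (n mod 3)"
    using x by (simp add: nat_pow_pow nat_pow_mult)
  then show ?thesis
    using x pow_three by simp
qed

lemma sandwich_eq_inv:
  assumes p: "p \<in> carrier G" and q: "q \<in> carrier G"
  shows "q \<otimes> p \<otimes> q = inv p \<otimes> inv q \<otimes> inv p"
proof -
  have "p \<otimes> (q \<otimes> p \<otimes> q) \<otimes> (p \<otimes> q) = \<one>"
    using cube_eq_one [of "p \<otimes> q"] p q by (simp add: m_assoc)
  then have "q \<otimes> p \<otimes> q = inv p \<otimes> inv (p \<otimes> q)"
    using p q by (metis inv_equality inv_solve_left m_closed)
  then show ?thesis
    using p q by (simp add: inv_mult_group m_assoc)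
qed

lemma commutes_with_conjugate:
  assumes x: "x \<in> carrier G" and y: "y \<in> carrier G"
  shows "x \<otimes> (inv y \<otimes> x \<otimes> y) = (inv y \<otimes> x \<otimes> y) \<otimes> x"
proof -
  have 1: "x \<otimes> inv y \<otimes> x = y \<otimes> inv x \<otimes> y" using sandwich_eq_inv [of "inv y" x] x y by simp
  have 2: "x \<otimes> y \<otimes> x = inv y \<otimes> inv x \<otimes> inv y" using sandwich_eq_inv [of y x] x y by simp
  have 3: "y \<otimes> y = inv y" "inv y \<otimes> inv y = y" using square_eq_inv y by auto
  have "x \<otimes> (inv y \<otimes> x \<otimes> y) = (x \<otimes> inv y \<otimes> x) \<otimes> y" using x y by (simp add: m_assoc)
  also have "\<dots> = y \<otimes> inv x \<otimes> (y \<otimes> y)" using 1 x y by (simp add: m_assoc)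
  also have "\<dots> = (inv y \<otimes> inv y) \<otimes> inv x \<otimes> inv y" using 3 by simp
  also have "\<dots> = inv y \<otimes> (x \<otimes> y \<otimes> x)" using 2 x y by (simp add: m_assoc)
  also have "\<dots> = (inv y \<otimes> x \<otimes> y) \<otimes> x" using x y by (simp add: m_assoc)
  finally show ?thesis .
qed

end


locale exponent3_pair = exponent3_group G for G :: "('a, 'b) monoid_scheme" (structure) +
  fixes a b
  assumes a_closed [simp]: "a \<in> carrier G" and b_closed [simp]: "b \<in> carrier G"
begin

definition c where "c = inv a \<otimes> inv b \<otimes> a \<otimes> b"

lemma c_closed [simp]: "c \<in> carrier G"
  by (simp add: c_def)

lemma c_commutes_a: "c \<otimes> a = a \<otimes> c"
proof -
  define t where "t = inv b \<otimes> a \<otimes> b"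
  have t: "t \<in> carrier G" by (simp add: t_def)
  have "t \<otimes> a = a \<otimes> t" using commutes_with_conjugate t_def by simp
  moreover have "c = inv a \<otimes> t" by (simp add: c_def t_def m_assoc)
  ultimately show ?thesis using t by (simp add: m_assoc)
qed

lemma c_commutes_b: "c \<otimes> b = b \<otimes> c"
proof -
  define t where "t = inv a \<otimes> inv b \<otimes> a"
  have t: "t \<in> carrier G" by (simp add: t_def)
  have "inv b \<otimes> t = t \<otimes> inv b"
    using commutes_with_conjugate [of "inv b" a] t_def by simp
  then have "b \<otimes> (inv b \<otimes> t) \<otimes> b = b \<otimes> (t \<otimes> inv b) \<otimes> b" by simp
  then have "t \<otimes> b = b \<otimes> t" using t by (simp add: m_assoc)
  moreover have "c = t \<otimes> b" by (simp add: c_def t_def m_assoc)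
  ultimately show ?thesis using t by (simp add: m_assoc)
qed

lemma b_mult_a: "b \<otimes> a = a \<otimes> (b \<otimes> (c \<otimes> c))"
proof -
  have "a \<otimes> (b \<otimes> inv c) = b \<otimes> a"
    by (simp add: c_def m_assoc inv_mult_group)
  then show ?thesis using square_eq_inv by simp
qed

lemma c_pow_commute_a_pow: "c [^] (m::nat) \<otimes> a [^] (n::nat) = a [^] n \<otimes> c [^] m"
proof -
  have "c [^] m \<otimes> a = a \<otimes> c [^] m" using group_commutes_pow [OF c_commutes_a] by simp
  from group_commutes_pow [OF this [symmetric]] show ?thesis by simp
qed

lemma c_pow_commute_b_pow: "c [^] (m::nat) \<otimes> b [^] (n::nat) = b [^] n \<otimes> c [^] m"
proof -
  have "c [^] m \<otimes> b = b \<otimes> c [^] m" using group_commutes_pow [OF c_commutes_b] by simp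
  from group_commutes_pow [OF this [symmetric]] show ?thesis by simp
qed

lemma c_pow_commute_a_pow': "x \<in> carrier G \<Longrightarrow> c [^] (m::nat) \<otimes> (a [^] (n::nat) \<otimes> x) = a [^] n \<otimes> (c [^] m \<otimes> x)"
  by (simp add: m_assoc [symmetric] c_pow_commute_a_pow)

lemma c_pow_commute_b_pow': "x \<in> carrier G \<Longrightarrow> c [^] (m::nat) \<otimes> (b [^] (n::nat) \<otimes> x) = b [^] n \<otimes> (c [^] m \<otimes> x)"
  by (simp add: m_assoc [symmetric] c_pow_commute_b_pow)

lemma pow_mult_pow': "x \<in> carrier G \<Longrightarrow> y \<in> carrier G \<Longrightarrow> y [^] (m::nat) \<otimes> (y [^] (n::nat) \<otimes> x) = y [^] (m + n) \<otimes> x"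
  by (simp add: m_assoc [symmetric] nat_pow_mult)

lemma b_mult_a_pow: "b \<otimes> a [^] (i::nat) = a [^] i \<otimes> (b \<otimes> c [^] (2 * i))"
proof (induction i)
  case (Suc i)
  have "c [^] (2::nat) \<otimes> c [^] (2 * i) = c [^] (2 * Suc i)" by (simp add: nat_pow_mult)
  moreover have "c [^] (2::nat) = c \<otimes> c" by (simp add: numeral_2_eq_2)
  ultimately have c2: "c \<otimes> (c \<otimes> c [^] (2 * i)) = c [^] (2 * Suc i)" by (simp add: m_assoc)
  have "b \<otimes> a [^] Suc i = (b \<otimes> a [^] i) \<otimes> a" by (simp add: m_assoc)
  also have "\<dots> = a [^] i \<otimes> (b \<otimes> (c [^] (2 * i) \<otimes> a))" using Suc by (simp add: m_assoc)
  also have "\<dots> = a [^] i \<otimes> (b \<otimes> a \<otimes> c [^] (2 * i))"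
    using c_pow_commute_a_pow [of "2 * i" 1] by (simp add: m_assoc)
  also have "\<dots> = a [^] i \<otimes> (a \<otimes> (b \<otimes> (c \<otimes> (c \<otimes> c [^] (2 * i)))))" by (simp add: b_mult_a m_assoc)
  also have "\<dots> = a [^] Suc i \<otimes> (b \<otimes> c [^] (2 * Suc i))" by (simp only: c2) (simp add: m_assoc)
  finally show ?case .
qed simp

lemma b_pow_mult_a_pow: "b [^] (j::nat) \<otimes> a [^] (i::nat) = a [^] i \<otimes> (b [^] j \<otimes> c [^] (2 * i * j))"
proof (induction j)
  case (Suc j)
  have "b [^] Suc j \<otimes> a [^] i = b \<otimes> (b [^] j \<otimes> a [^] i)"
    by (subst nat_pow_Suc2) (simp_all add: m_assoc)
  also have "\<dots> = a [^] i \<otimes> (b \<otimes> (c [^] (2 * i) \<otimes> (b [^] j \<otimes> c [^] (2 * i * j))))"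
    using Suc by (simp add: b_mult_a_pow m_assoc [symmetric])
  also have "\<dots> = a [^] i \<otimes> (b \<otimes> (b [^] j \<otimes> (c [^] (2 * i) \<otimes> c [^] (2 * i * j))))"
    by (simp add: c_pow_commute_b_pow')
  also have "\<dots> = a [^] i \<otimes> (b [^] Suc j \<otimes> (c [^] (2 * i) \<otimes> c [^] (2 * i * j)))"
    by (simp only: nat_pow_Suc2 m_assoc b_closed c_closed nat_pow_closed m_closed)
  also have "\<dots> = a [^] i \<otimes> (b [^] Suc j \<otimes> c [^] (2 * i * Suc j))"
    by (simp only: nat_pow_mult c_closed) (simp add: algebra_simps)
  finally show ?case .
qed simp

lemma b_pow_mult_a_pow': "x \<in> carrier G \<Longrightarrow>
    b [^] (j::nat) \<otimes> (a [^] (i::nat) \<otimes> x) = a [^] i \<otimes> (b [^] j \<otimes> (c [^] (2 * i * j) \<otimes> x))"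
  by (simp add: m_assoc [symmetric] b_pow_mult_a_pow)

definition nf :: "nat \<Rightarrow> nat \<Rightarrow> nat \<Rightarrow> 'a" where
  "nf i j k = a [^] i \<otimes> (b [^] j \<otimes> c [^] k)"

lemma nf_closed [simp]: "nf i j k \<in> carrier G"
  by (simp add: nf_def)

lemma nf_mult: "nf i j k \<otimes> nf i' j' k' = nf (i + i') (j + j') (k + k' + 2 * i' * j)"
  by (simp add: nf_def m_assoc c_pow_commute_a_pow' c_pow_commute_b_pow' b_pow_mult_a_pow'
      pow_mult_pow' nat_pow_mult algebra_simps)

lemma nf_mult_4:
  "nf i1 j1 k1 \<otimes> nf i2 j2 k2 \<otimes> nf i3 j3 k3 \<otimes> nf i4 j4 k4 \<otimes> nf 0 0 m =
    nf (i1 + i2 + i3 + i4) (j1 + j2 + j3 + j4)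
      (k1 + k2 + k3 + k4 + m + 2 * (i2 * j1 + i3 * (j1 + j2) + i4 * (j1 + j2 + j3)))"
  by (simp add: nf_mult algebra_simps)

lemma nf_mod_3: "nf i j k = nf (i mod 3) (j mod 3) (k mod 3)"
  unfolding nf_def by (metis a_closed b_closed c_closed pow_mod_3)

lemma nf_eq_one: "i mod 3 = 0 \<Longrightarrow> j mod 3 = 0 \<Longrightarrow> k mod 3 = 0 \<Longrightarrow> nf i j k = \<one>"
  by (subst nf_mod_3) (simp add: nf_def)

lemma nf_generators: "nf 1 0 0 = a" "nf 0 1 0 = b" "nf 0 0 k = c [^] k"
  by (simp_all add: nf_def)

end


section \<open>Coordinates in the Heisenberg group of order 27\<close>

locale heisenberg27 = exponent3_pair G a b for G :: "('a, 'b) monoid_scheme" (structure) and a b +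
  assumes card_carrier: "card (carrier G) = 27"
    and a_b_not_commute: "a \<otimes> b \<noteq> b \<otimes> a"
begin

lemma c_pow_eq_one: assumes "c [^] (n::nat) = \<one>" shows "n mod 3 = 0"
proof (rule ccontr)
  assume n: "n mod 3 \<noteq> 0"
  have "c \<noteq> \<one>"
    using a_b_not_commute b_mult_a by auto
  moreover have "c [^] (n mod 3) = \<one>" using assms pow_mod_3 [of c n] by simp
  ultimately show False
    using n mod_3_cases [of n] square_eq_inv [of c] by (auto simp: numeral_2_eq_2)
qed

lemma nf_eq_one_imp:
  assumes e: "nf i j k = \<one>" shows "i mod 3 = 0" "j mod 3 = 0" "k mod 3 = 0"
proof -
  have "nf (i + 1) j (k + 2 * j) = nf (i + 1) j k"
    using e nf_mult [of i j k 1 0 0] nf_mult [of 1 0 0 i j k] by (simp add: nf_generators)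
  then have "nf (i + 1) j k \<otimes> c [^] (2 * j) = nf (i + 1) j k \<otimes> \<one>"
    using nf_mult [of "i + 1" j k 0 0 "2 * j"] by (simp add: nf_generators)
  then have "(2 * j) mod 3 = 0"
    by (intro c_pow_eq_one) simp
  then show j: "j mod 3 = 0" by presburger
  have "nf i (j + 1) (k + 2 * i) = nf i (j + 1) k"
    using e nf_mult [of i j k 0 1 0] nf_mult [of 0 1 0 i j k] by (simp add: nf_generators)
  then have "nf i (j + 1) k \<otimes> c [^] (2 * i) = nf i (j + 1) k \<otimes> \<one>"
    using nf_mult [of i "j + 1" k 0 0 "2 * i"] by (simp add: nf_generators)
  then have "(2 * i) mod 3 = 0"
    by (intro c_pow_eq_one) simp
  then show i: "i mod 3 = 0" by presburger
  have "c [^] k = \<one>"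
    using e nf_mod_3 [of i j k] nf_mod_3 [of 0 0 k] i j by (simp add: nf_generators)
  then show "k mod 3 = 0" by (rule c_pow_eq_one)
qed

lemma nf_inj:
  assumes e: "nf i j k = nf i' j' k'"
    and "i < 3" "j < 3" "k < 3" "i' < 3" "j' < 3" "k' < 3"
  shows "i = i' \<and> j = j' \<and> k = k'"
proof -
  define h where "h = nf (2 * i') (2 * j') (2 * k' + 2 * i' * j')"
  have "nf i' j' k' \<otimes> h = \<one>"
    unfolding h_def nf_mult by (rule nf_eq_one) (simp_all add: algebra_simps)
  then have "nf i j k \<otimes> h = \<one>"
    using e by simp
  then have "nf (i + 2 * i') (j + 2 * j') (k + (2 * k' + 2 * i' * j') + 2 * (2 * i') * j) = \<one>"
    by (simp add: h_def nf_mult)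
  note sums = nf_eq_one_imp [OF this]
  have i: "i = i'"
    using sums(1) less_3_cases [OF assms(2)] less_3_cases [OF assms(5)] by (elim disjE; simp)
  moreover have j: "j = j'"
    using sums(2) less_3_cases [OF assms(3)] less_3_cases [OF assms(6)] by (elim disjE; simp)
  moreover have "k = k'"
    using sums(3) less_3_cases [OF assms(4)] less_3_cases [OF assms(7)]
      less_3_cases [OF assms(5)] less_3_cases [OF assms(6)] unfolding j
    by (elim disjE; simp)
  ultimately show ?thesis by simp
qed

lemma bij_nf: "bij_betw (\<lambda>(i, j, k). nf i j k) ({..<3} \<times> {..<3} \<times> {..<3}) (carrier G)"
proof -
  have inj: "inj_on (\<lambda>(i, j, k). nf i j k) ({..<3} \<times> {..<3} \<times> {..<3})"
    by (rule inj_onI) (auto dest: nf_inj)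
  have "finite (carrier G)"
    using card_carrier card.infinite by fastforce
  moreover have "card ((\<lambda>(i, j, k). nf i j k) ` ({..<3} \<times> {..<3} \<times> {..<3})) = card (carrier G)"
    using card_image [OF inj] card_carrier by (simp add: card_cartesian_product)
  ultimately have "(\<lambda>(i, j, k). nf i j k) ` ({..<3} \<times> {..<3} \<times> {..<3}) = carrier G"
    by (intro card_subset_eq) auto
  with inj show ?thesis unfolding bij_betw_def by simp
qed

definition coords :: "'a \<Rightarrow> nat \<times> nat \<times> nat" where
  "coords = inv_into ({..<3} \<times> {..<3} \<times> {..<3}) (\<lambda>(i, j, k). nf i j k)"

definition ea :: "'a \<Rightarrow> nat" where "ea g = fst (coords g)"
definition eb :: "'a \<Rightarrow> nat" where "eb g = fst (snd (coords g))"
definition ec :: "'a \<Rightarrow> nat" where "ec g = snd (snd (coords g))"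

lemma nf_coords: "g \<in> carrier G \<Longrightarrow> nf (ea g) (eb g) (ec g) = g"
  using bij_betw_inv_into_right [OF bij_nf, of g]
  unfolding ea_def eb_def ec_def coords_def by (simp add: case_prod_beta)

lemma coords_less:
  assumes "g \<in> carrier G" shows "ea g < 3" "eb g < 3" "ec g < 3"
  using bij_betwE [OF bij_betw_inv_into [OF bij_nf]] assms
  unfolding ea_def eb_def ec_def coords_def by auto

lemma coords_nf: "ea (nf i j k) = i mod 3" "eb (nf i j k) = j mod 3" "ec (nf i j k) = k mod 3"
proof -
  have "coords (nf i j k) = (i mod 3, j mod 3, k mod 3)"
    unfolding coords_def nf_mod_3 [of i j k]
    using inv_into_f_f [OF bij_betw_imp_inj_on [OF bij_nf], of "(i mod 3, j mod 3, k mod 3)"]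
    by simp
  then show "ea (nf i j k) = i mod 3" "eb (nf i j k) = j mod 3" "ec (nf i j k) = k mod 3"
    by (simp_all add: ea_def eb_def ec_def)
qed

lemma eq_iff_coords:
  "g \<in> carrier G \<Longrightarrow> h \<in> carrier G \<Longrightarrow> g = h \<longleftrightarrow> ea g = ea h \<and> eb g = eb h \<and> ec g = ec h"
  by (metis nf_coords)

lemma coords_mult:
  assumes g: "g \<in> carrier G" and h: "h \<in> carrier G"
  shows "ea (g \<otimes> h) = (ea g + ea h) mod 3" and "eb (g \<otimes> h) = (eb g + eb h) mod 3"
    and "ec (g \<otimes> h) = (ec g + ec h + 2 * (ea h * eb g)) mod 3"
proof -
  have "g \<otimes> h = nf (ea g + ea h) (eb g + eb h) (ec g + ec h + 2 * (ea h * eb g))"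
    using nf_mult [of "ea g" "eb g" "ec g" "ea h" "eb h" "ec h"] nf_coords g h
    by (simp add: mult.assoc)
  then show "ea (g \<otimes> h) = (ea g + ea h) mod 3" "eb (g \<otimes> h) = (eb g + eb h) mod 3"
    "ec (g \<otimes> h) = (ec g + ec h + 2 * (ea h * eb g)) mod 3"
    by (simp_all add: coords_nf)
qed

lemma commute_iff_parallel:
  assumes g: "g \<in> carrier G" and h: "h \<in> carrier G"
  shows "g \<otimes> h = h \<otimes> g \<longleftrightarrow> parallel3 (ea g) (eb g) (ea h) (eb h)"
proof -
  have "g \<otimes> h = h \<otimes> g \<longleftrightarrow>
      (ec g + ec h + 2 * (ea h * eb g)) mod 3 = (ec g + ec h + 2 * (ea g * eb h)) mod 3"
    using eq_iff_coords [of "g \<otimes> h" "h \<otimes> g"] coords_mult [OF g h] coords_mult [OF h g] g h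
    by (simp add: ac_simps)
  then show ?thesis
    unfolding parallel3_def add_double_mod_3_cancel .
qed

lemma coords_a: "ea a = 1" "eb a = 0"
  using coords_nf [of 1 0 0] unfolding nf_generators by simp_all

lemma coords_b: "ea b = 0" "eb b = 1"
  using coords_nf [of 0 1 0] unfolding nf_generators by simp_all

lemma center_iff_coords: "g \<in> center G \<longleftrightarrow> g \<in> carrier G \<and> ea g = 0 \<and> eb g = 0"
proof
  assume z: "g \<in> center G"
  then have g: "g \<in> carrier G" and "g \<otimes> a = a \<otimes> g" "g \<otimes> b = b \<otimes> g"
    by (auto simp: center_def)
  then have "eb g mod 3 = 0" "ea g mod 3 = 0"
    using commute_iff_parallel [OF g] coords_a coords_b by (auto simp: parallel3_def)
  then show "g \<in> carrier G \<and> ea g = 0 \<and> eb g = 0"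
    using g coords_less [OF g] by simp
next
  assume "g \<in> carrier G \<and> ea g = 0 \<and> eb g = 0"
  then show "g \<in> center G"
    using commute_iff_parallel by (auto simp: center_def parallel3_def)
qed

lemma not_central_if_mult_central:
  assumes p: "p \<in> carrier G" and x: "x \<in> carrier G"
    and "p \<otimes> x \<in> center G" and "x \<notin> center G"
  shows "p \<notin> center G"
proof
  assume "p \<in> center G"
  then have "ea x = 0" "eb x = 0"
    using assms(3) coords_mult [OF p x] coords_less [OF x] by (simp_all add: center_iff_coords)
  with assms(4) x show False by (simp add: center_iff_coords)
qed

lemma coords_third_factor:
  assumes x: "x1 \<in> carrier G" "x2 \<in> carrier G" "x3 \<in> carrier G"
    and "x1 \<otimes> x2 \<otimes> x3 \<in> center G"
  shows "ea x3 = (6 - ea x1 - ea x2) mod 3" and "eb x3 = (6 - eb x1 - eb x2) mod 3"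
proof -
  have "((ea x1 + ea x2) mod 3 + ea x3) mod 3 = 0" "((eb x1 + eb x2) mod 3 + eb x3) mod 3 = 0"
    using assms coords_mult [OF x(1,2)] coords_mult [of "x1 \<otimes> x2" x3]
    by (simp_all add: center_iff_coords)
  then show "ea x3 = (6 - ea x1 - ea x2) mod 3" "eb x3 = (6 - eb x1 - eb x2) mod 3"
    using third_summand_mod_3 [OF coords_less(1) [OF x(1)] coords_less(1) [OF x(2)] coords_less(1) [OF x(3)]]
      third_summand_mod_3 [OF coords_less(2) [OF x(1)] coords_less(2) [OF x(2)] coords_less(2) [OF x(3)]]
    by simp_all
qed

lemma central_if_ab_coords_unchanged:
  assumes y: "y \<in> carrier G" and u: "u \<in> carrier G"
    and "ea (y \<otimes> u) = ea y" and "eb (y \<otimes> u) = eb y"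
  shows "u \<in> center G"
  using assms coords_mult [OF y u]
    less_3_cases [OF coords_less(1) [OF y]] less_3_cases [OF coords_less(1) [OF u]]
    less_3_cases [OF coords_less(2) [OF y]] less_3_cases [OF coords_less(2) [OF u]]
  unfolding center_iff_coords by (elim disjE; simp)

lemma zclass_iff_coords:
  assumes g: "g \<in> carrier G"
  shows "x \<in> zclass G g \<longleftrightarrow> x \<in> carrier G \<and>
    (ea x = ea g \<and> eb x = eb g \<or> ea x = (2 * ea g) mod 3 \<and> eb x = (2 * eb g) mod 3)"
    (is "_ \<longleftrightarrow> _ \<and> ?coords x")
proof
  assume "x \<in> zclass G g"
  then obtain l u where x: "x = g [^] l \<otimes> u" and l: "l \<in> {1, 2::nat}" and u: "u \<in> center G"
    unfolding zclass_def by blast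
  have uc: "u \<in> carrier G" "ea u = 0" "eb u = 0" using u center_iff_coords by auto
  have "x = g \<otimes> u \<or> x = g \<otimes> g \<otimes> u"
    using x l g by (auto simp: numeral_2_eq_2)
  then show "x \<in> carrier G \<and> ?coords x"
    using coords_mult [OF g uc(1)] coords_mult [of "g \<otimes> g" u] coords_mult [OF g g] uc g
      coords_less [OF g]
    by (auto simp: mult_2)
next
  assume x: "x \<in> carrier G \<and> ?coords x"
  have "\<exists>l \<in> {1, 2::nat}. ea x = ea (g [^] l) \<and> eb x = eb (g [^] l)"
  proof (cases "ea x = ea g \<and> eb x = eb g")
    case True
    then show ?thesis using g by (intro bexI [of _ 1]) auto
  next
    case False
    then show ?thesis
      using g x coords_mult [OF g g] by (intro bexI [of _ 2]) (auto simp: numeral_2_eq_2 mult_2)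
  qed
  then obtain l :: nat where l: "l \<in> {1, 2}" and same: "ea x = ea (g [^] l)" "eb x = eb (g [^] l)"
    by blast
  define u where "u = inv (g [^] l) \<otimes> x"
  have "x = g [^] l \<otimes> u" using g x by (simp add: u_def)
  moreover have "u \<in> center G"
    using central_if_ab_coords_unchanged [of "g [^] l" u] same g x by (simp add: u_def)
  ultimately show "x \<in> zclass G g"
    using l unfolding zclass_def by blast
qed

lemma zclass_eq_iff_commute:
  assumes g: "g \<in> carrier G" and h: "h \<in> carrier G"
    and "g \<notin> center G" and "h \<notin> center G"
  shows "zclass G g = zclass G h \<longleftrightarrow> g \<otimes> h = h \<otimes> g"
proof
  assume "zclass G g = zclass G h"
  moreover have "h \<in> zclass G h" using zclass_iff_coords [OF h] h by simp
  ultimately have "ea h = ea g \<and> eb h = eb g \<or> ea h = (2 * ea g) mod 3 \<and> eb h = (2 * eb g) mod 3"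
    using zclass_iff_coords [OF g] by simp
  then show "g \<otimes> h = h \<otimes> g"
    using commute_iff_parallel [OF g h]
      less_3_cases [OF coords_less(1) [OF g]] less_3_cases [OF coords_less(2) [OF g]]
    unfolding parallel3_def by (elim disjE; simp)
next
  assume "g \<otimes> h = h \<otimes> g"
  then have par: "ea h = ea g \<and> eb h = eb g \<or> ea h = (2 * ea g) mod 3 \<and> eb h = (2 * eb g) mod 3"
    using parallel3_cases coords_less [OF g] coords_less [OF h] assms commute_iff_parallel [OF g h]
    by (simp add: center_iff_coords)
  have "(2 * ((2 * x) mod 3)) mod 3 = x" if "x < 3" for x :: nat
    using less_3_cases [OF that] by (elim disjE; simp)
  then have "x \<in> zclass G g \<longleftrightarrow> x \<in> zclass G h" for x
    unfolding zclass_iff_coords [OF g] zclass_iff_coords [OF h] using par coords_less [OF g] by auto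
  then show "zclass G g = zclass G h" by blast
qed

lemma noncommuting_if_zclass_ne:
  "g \<in> carrier G - center G \<Longrightarrow> h \<in> carrier G - center G \<Longrightarrow> zclass G g \<noteq> zclass G h \<Longrightarrow>
    g \<otimes> h \<noteq> h \<otimes> g"
  using zclass_eq_iff_commute by blast

end


section \<open>Short 3-sequences\<close>

lemma three_distinct_subseteq_mset:
  "x \<in># T \<Longrightarrow> y \<in># T \<Longrightarrow> z \<in># T \<Longrightarrow> x \<noteq> y \<Longrightarrow> x \<noteq> z \<Longrightarrow> y \<noteq> z \<Longrightarrow> {#x, y, z#} \<subseteq># T"
  unfolding subseteq_mset_def
  by (auto simp: count_greater_zero_iff [symmetric] simp del: count_greater_zero_iff)

lemma two_and_member_subseteq_mset:
  assumes "y \<in># U" shows "{#p, q, y#} \<subseteq># {#p, q, r#} + U"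
proof -
  have "{#p, q#} + {#y#} \<subseteq># {#p, q#} + U"
    using assms by (intro subset_mset.add_left_mono) simp
  also have "\<dots> \<subseteq># {#p, q, r#} + U" by simp
  finally show ?thesis by simp
qed

lemma obtain_image_outside:
  assumes "finite B" and "card B < card (f ` A)"
  obtains x where "x \<in> A" and "f x \<notin> B"
  using assms card_mono by (metis image_subset_iff not_le)

lemma EGZ_I:
  assumes "is_seq G T" and "central_product G T" and "{#h1, h2, h3#} \<subseteq># T"
    and "h3 \<otimes>\<^bsub>G\<^esub> h1 \<noteq> h1 \<otimes>\<^bsub>G\<^esub> h3" and "h3 \<otimes>\<^bsub>G\<^esub> h2 \<noteq> h2 \<otimes>\<^bsub>G\<^esub> h3"
    and "h3 \<otimes>\<^bsub>G\<^esub> (h1 \<otimes>\<^bsub>G\<^esub> h2) \<noteq> (h1 \<otimes>\<^bsub>G\<^esub> h2) \<otimes>\<^bsub>G\<^esub> h3"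
  shows "EGZ G T"
  using assms unfolding EGZ_def commute_def by blast

context heisenberg27
begin

lemma list_prod_coords:
  "set xs \<subseteq> carrier G \<Longrightarrow> list_prod G xs \<in> carrier G \<and>
    ea (list_prod G xs) = sum_list (map ea xs) mod 3 \<and> eb (list_prod G xs) = sum_list (map eb xs) mod 3"
proof (induction xs)
  case Nil
  then show ?case
    using coords_nf [of 0 0 0] nf_eq_one [of 0 0 0] by (simp add: list_prod_def)
next
  case (Cons x xs)
  then show ?case
    using coords_mult [of x "list_prod G xs"]
    by (simp add: list_prod_def [of G "x # xs"] list_prod_def [of G xs, symmetric] mod_add_right_eq)
qed

lemma central_product_iff_coords:
  assumes "is_seq G T"
  shows "central_product G T \<longleftrightarrow> 3 dvd (\<Sum>x\<in>#T. ea x) \<and> 3 dvd (\<Sum>x\<in>#T. eb x)"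
proof -
  obtain xs where xs: "mset xs = T" using ex_mset by blast
  have prod_coords: "list_prod G ys \<in> center G \<longleftrightarrow> 3 dvd (\<Sum>x\<in>#T. ea x) \<and> 3 dvd (\<Sum>x\<in>#T. eb x)"
    if "mset ys = T" for ys
  proof -
    have "set ys \<subseteq> carrier G" using assms that unfolding is_seq_def by auto
    moreover have "sum_list (map ea ys) = (\<Sum>x\<in>#T. ea x)" "sum_list (map eb ys) = (\<Sum>x\<in>#T. eb x)"
      using that by (metis mset_map sum_mset_sum_list)+
    ultimately show ?thesis
      using list_prod_coords center_iff_coords by (simp add: dvd_eq_mod_eq_0)
  qed
  show ?thesis
    unfolding central_product_def using prod_coords xs by blast
qed

lemma short3_central_product:
  assumes "short3 G U" shows "is_seq G U" and "central_product G U"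
proof -
  obtain x1 x2 x3 where U: "U = {#x1, x2, x3#}" and z: "x1 \<otimes> x2 \<otimes> x3 \<in> center G"
    and x: "x1 \<in> carrier G" "x2 \<in> carrier G" "x3 \<in> carrier G"
    using assms unfolding short3_def is_seq_def by auto
  show seq: "is_seq G U" using assms unfolding short3_def by simp
  have "list_prod G [x1, x2, x3] \<in> center G"
    using z x by (simp add: list_prod_def m_assoc)
  then show "central_product G U"
    using central_product_iff_coords [OF seq] list_prod_coords [of "[x1, x2, x3]"] x U
    by (simp add: center_iff_coords ac_simps dvd_eq_mod_eq_0)
qed

lemma short3_sum_central_product:
  assumes "short3 G U1" and "short3 G U2"
  shows "is_seq G (U1 + U2)" and "central_product G (U1 + U2)"
proof -
  show seq: "is_seq G (U1 + U2)"
    using short3_central_product assms unfolding is_seq_def by auto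
  have "3 dvd (\<Sum>x\<in>#U. ea x) \<and> 3 dvd (\<Sum>x\<in>#U. eb x)" if "short3 G U" for U
    using short3_central_product [OF that] central_product_iff_coords by blast
  then show "central_product G (U1 + U2)"
    unfolding central_product_iff_coords [OF seq] using assms by (auto intro: dvd_add)
qed

lemma EGZ_if_egz_coords:
  assumes "is_seq G T" and "central_product G T" and "{#h1, h2, h3#} \<subseteq># T"
    and h: "h1 \<in> carrier G" "h2 \<in> carrier G" "h3 \<in> carrier G"
    and "egz_coords (ea h1) (eb h1) (ea h2) (eb h2) (ea h3) (eb h3)"
  shows "EGZ G T"
proof (rule EGZ_I [OF assms(1-3)])
  show "h3 \<otimes> h1 \<noteq> h1 \<otimes> h3" "h3 \<otimes> h2 \<noteq> h2 \<otimes> h3" "h3 \<otimes> (h1 \<otimes> h2) \<noteq> h1 \<otimes> h2 \<otimes> h3"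
    using assms(7) commute_iff_parallel [OF h(3)] coords_mult [OF h(1,2)] h
    unfolding egz_coords_def by auto
qed

lemma EGZ_four_zclasses:
  assumes U1: "short3 G U1" and U2: "short3 G U2"
    and four: "card (nc_zclasses G (U1 + U2)) = 4"
  shows "EGZ G (U1 + U2)"
proof -
  define N where "N = {x \<in> set_mset (U1 + U2). x \<notin> center G}"
  have N: "x \<in> carrier G - center G" "x \<in># U1 + U2" if "x \<in> N" for x
    using that short3_sum_central_product [OF U1 U2] unfolding N_def is_seq_def by auto
  have card_N: "card (zclass G ` N) = 4"
    using four unfolding nc_zclasses_def N_def .
  obtain x where x: "x \<in> N"
    using obtain_image_outside [of "{}" "zclass G" N] card_N by auto
  obtain y where y: "y \<in> N" and "zclass G y \<notin> {zclass G x}"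
    using obtain_image_outside [of "{zclass G x}" "zclass G" N] card_N by auto
  then have xy: "zclass G x \<noteq> zclass G y" by auto
  then have "x \<otimes> y \<noteq> y \<otimes> x"
    using noncommuting_if_zclass_ne N(1) [OF x] N(1) [OF y] by blast
  then have xy_nc: "x \<otimes> y \<in> carrier G - center G"
    using mult_not_central_if_not_commute N(1) [OF x] N(1) [OF y] by auto
  have "card {zclass G x, zclass G y, zclass G (x \<otimes> y)} < card (zclass G ` N)"
    using card_N by (auto simp: card_insert_if)
  then obtain h where h: "h \<in> N" and hz: "zclass G h \<notin> {zclass G x, zclass G y, zclass G (x \<otimes> y)}"
    by (rule obtain_image_outside [rotated]) auto
  have "{#x, y, h#} \<subseteq># U1 + U2"
    using N(2) [OF x] N(2) [OF y] N(2) [OF h] xy hz by (intro three_distinct_subseteq_mset) auto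
  moreover have "h \<otimes> x \<noteq> x \<otimes> h" "h \<otimes> y \<noteq> y \<otimes> h" "h \<otimes> (x \<otimes> y) \<noteq> (x \<otimes> y) \<otimes> h"
    using noncommuting_if_zclass_ne N(1) [OF h] N(1) [OF x] N(1) [OF y] xy_nc hz by auto
  ultimately show ?thesis
    by (rule EGZ_I [OF short3_sum_central_product [OF U1 U2]])
qed

lemma EGZ_thick_commuting:
  assumes U1: "short3 G {#x1, x2, x3#}" and U2: "short3 G U2"
    and z: "x1 \<otimes> x2 \<otimes> x3 \<in> center G"
    and nc: "x1 \<notin> center G" "x2 \<notin> center G" "x3 \<notin> center G"
    and x12: "x1 \<otimes> x2 = x2 \<otimes> x1"
    and two: "2 \<le> card (nc_zclasses G ({#x1, x2, x3#} + U2))"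
  shows "EGZ G ({#x1, x2, x3#} + U2)"
proof -
  define T where "T = {#x1, x2, x3#} + U2"
  define N where "N = {x \<in> set_mset T. x \<notin> center G}"
  have T: "is_seq G T" "central_product G T"
    using short3_sum_central_product [OF U1 U2] unfolding T_def by auto
  have x: "x1 \<in> carrier G" "x2 \<in> carrier G" "x3 \<in> carrier G"
    using U1 unfolding short3_def is_seq_def by auto
  obtain h where "h \<in> N" and hx1: "zclass G h \<noteq> zclass G x1"
    using obtain_image_outside [of "{zclass G x1}" "zclass G" N] two
    unfolding nc_zclasses_def N_def T_def by auto
  then have h: "h \<in> carrier G - center G" "h \<in># T"
    using T unfolding N_def is_seq_def by auto
  have prod: "x1 \<otimes> x2 \<in> carrier G" using x by simp
  have prod_nc: "x1 \<otimes> x2 \<notin> center G"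
    using not_central_if_mult_central [OF prod x(3) z nc(3)] .
  have "x1 \<otimes> x2 \<otimes> x1 = x1 \<otimes> (x1 \<otimes> x2)" using x by (simp add: m_assoc flip: x12)
  then have z_prod: "zclass G (x1 \<otimes> x2) = zclass G x1"
    using zclass_eq_iff_commute [OF prod x(1) prod_nc nc(1)] by simp
  have z2: "zclass G x2 = zclass G x1"
    using zclass_eq_iff_commute [OF x(2) x(1) nc(2) nc(1)] x12 by simp
  have "{#x1, x2, h#} \<subseteq># T"
  proof (cases "h \<in># U2")
    case True
    then show ?thesis unfolding T_def by (rule two_and_member_subseteq_mset)
  next
    case False
    then have "h = x3"
      using h(2) hx1 z2 unfolding T_def by auto
    then show ?thesis unfolding T_def by simp
  qed
  moreover have "h \<otimes> x1 \<noteq> x1 \<otimes> h" "h \<otimes> x2 \<noteq> x2 \<otimes> h" "h \<otimes> (x1 \<otimes> x2) \<noteq> (x1 \<otimes> x2) \<otimes> h"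
    using noncommuting_if_zclass_ne [OF h(1)] x prod nc prod_nc hx1 z_prod z2 by auto
  ultimately have "EGZ G T"
    by (rule EGZ_I [OF T])
  then show ?thesis unfolding T_def .
qed

lemma EGZ_thick_noncommuting:
  assumes U1: "short3 G {#x1, x2, x3#}" and U2: "short3 G U2"
    and z: "x1 \<otimes> x2 \<otimes> x3 \<in> center G"
    and nc: "x1 \<notin> center G" "x2 \<notin> center G"
    and x12: "x1 \<otimes> x2 \<noteq> x2 \<otimes> x1"
    and y: "y \<in># U2" "y \<notin> center G"
  shows "EGZ G ({#x1, x2, x3#} + U2)"
proof -
  define T where "T = {#x1, x2, x3#} + U2"
  have T: "is_seq G T" "central_product G T"
    using short3_sum_central_product [OF U1 U2] unfolding T_def by auto
  have x: "x1 \<in> carrier G" "x2 \<in> carrier G" "x3 \<in> carrier G" and yc: "y \<in> carrier G"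
    using U1 U2 y unfolding short3_def is_seq_def by auto
  note x3 = coords_third_factor [OF x z]
  note triple = EGZ_if_egz_coords [OF T]
  have "{#x1, x2, y#} \<subseteq># T" "{#x1, y, x2#} \<subseteq># T" "{#x2, y, x3#} \<subseteq># T" "{#x3, y, x1#} \<subseteq># T"
    "{#y, x2, x3#} \<subseteq># T" "{#y, x3, x1#} \<subseteq># T" "{#y, x1, x2#} \<subseteq># T"
    using two_and_member_subseteq_mset [OF y(1), of x1 x2 x3]
      two_and_member_subseteq_mset [OF y(1), of x2 x3 x1]
      two_and_member_subseteq_mset [OF y(1), of x3 x1 x2]
    unfolding T_def by (simp_all add: add_mset_commute)
  moreover have "egz_coords (ea x1) (eb x1) (ea x2) (eb x2) (ea y) (eb y) \<or>
      egz_coords (ea x1) (eb x1) (ea y) (eb y) (ea x2) (eb x2) \<or>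
      egz_coords (ea x2) (eb x2) (ea y) (eb y) (ea x3) (eb x3) \<or>
      egz_coords (ea x3) (eb x3) (ea y) (eb y) (ea x1) (eb x1) \<or>
      egz_coords (ea y) (eb y) (ea x2) (eb x2) (ea x3) (eb x3) \<or>
      egz_coords (ea y) (eb y) (ea x3) (eb x3) (ea x1) (eb x1) \<or>
      egz_coords (ea y) (eb y) (ea x1) (eb x1) (ea x2) (eb x2)"
    using x12 nc y(2) x yc commute_iff_parallel [OF x(1,2)]
    by (intro egz_coords_among_seven [OF coords_less(1,2) [OF x(1)] coords_less(1,2) [OF x(2)]
          coords_less(1,2) [OF yc] _ _ _ _ x3]) (auto simp: center_iff_coords)
  ultimately show ?thesis
    using triple [of x1 x2 y] triple [of x1 y x2] triple [of x2 y x3] triple [of x3 y x1]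
      triple [of y x2 x3] triple [of y x3 x1] triple [of y x1 x2] x yc
    unfolding T_def by blast
qed

lemma EGZ_thick:
  assumes U1: "short3 G U1" and U2: "short3 G U2" and "\<not> central_type G U2"
    and "thick_type G U1" and two: "2 \<le> card (nc_zclasses G (U1 + U2))"
  shows "EGZ G (U1 + U2)"
proof -
  obtain x1 x2 x3 where U1_eq: "U1 = {#x1, x2, x3#}" and z: "x1 \<otimes> x2 \<otimes> x3 \<in> center G"
    using U1 unfolding short3_def by auto
  have U1': "short3 G {#x1, x2, x3#}" using U1 U1_eq by simp
  have nc: "x1 \<notin> center G" "x2 \<notin> center G" "x3 \<notin> center G"
    using \<open>thick_type G U1\<close> unfolding U1_eq thick_type_def thick_A_def thick_B_def by auto
  obtain y where y: "y \<in># U2" "y \<notin> center G"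
    using U2 \<open>\<not> central_type G U2\<close> unfolding central_type_def by auto
  show ?thesis
    unfolding U1_eq
  proof (cases "x1 \<otimes> x2 = x2 \<otimes> x1")
    case True
    then show "EGZ G ({#x1, x2, x3#} + U2)"
      using EGZ_thick_commuting [OF U1' U2 z nc] two U1_eq by simp
  next
    case False
    show "EGZ G ({#x1, x2, x3#} + U2)"
      by (fact EGZ_thick_noncommuting [OF U1' U2 z nc(1,2) False y])
  qed
qed

lemma EGZ_some_thick:
  assumes "short3 G U1" and "short3 G U2" and "\<not> central_type G U1" and "\<not> central_type G U2"
    and "2 \<le> card (nc_zclasses G (U1 + U2))" and "thick_type G U1 \<or> thick_type G U2"
  shows "EGZ G (U1 + U2)"
proof (cases "thick_type G U1")
  case True
  then show ?thesis using assms EGZ_thick by blast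
next
  case False
  then have "EGZ G (U2 + U1)"
    using assms EGZ_thick [of U2 U1] by (simp add: add.commute)
  then show ?thesis by (simp add: add.commute)
qed

lemma nf_reordered_product_eq_one:
  fixes i j k :: "nat \<Rightarrow> nat"
  assumes less: "i 1 < 3" "j 1 < 3" "i 2 < 3" "j 2 < 3" "i 3 < 3" "j 3 < 3" "i 4 < 3" "j 4 < 3"
    and pairs: "(i 1 + i 2) mod 3 = 0" "(j 1 + j 2) mod 3 = 0"
      "(i 3 + i 4) mod 3 = 0" "(j 3 + j 4) mod 3 = 0"
    and not_par: "\<not> parallel3 (i 1) (j 1) (i 3) (j 3)"
  shows "\<exists>\<sigma>. \<sigma> permutes {1..4} \<and>
    nf (i (\<sigma> 1)) (j (\<sigma> 1)) (k (\<sigma> 1)) \<otimes> nf (i (\<sigma> 2)) (j (\<sigma> 2)) (k (\<sigma> 2)) \<otimes>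
    nf (i (\<sigma> 3)) (j (\<sigma> 3)) (k (\<sigma> 3)) \<otimes> nf (i (\<sigma> 4)) (j (\<sigma> 4)) (k (\<sigma> 4)) \<otimes> nf 0 0 m = \<one>"
proof -
  have sums: "(i 1 + i 2 + i 3 + i 4) mod 3 = 0" "(j 1 + j 2 + j 3 + j 4) mod 3 = 0"
    using pairs by presburger+
  define K where "K = k 1 + k 2 + k 3 + k 4 + m"
  consider
      "(K + 2 * (i 2 * j 1 + i 3 * (j 1 + j 2) + i 4 * (j 1 + j 2 + j 3))) mod 3 = 0"
    | "(K + 2 * (i 3 * j 1 + i 2 * (j 1 + j 3) + i 4 * (j 1 + j 3 + j 2))) mod 3 = 0"
    | "(K + 2 * (i 2 * j 4 + i 3 * (j 4 + j 2) + i 1 * (j 4 + j 2 + j 3))) mod 3 = 0"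
    using one_of_three_orderings [OF less pairs not_par, of K] by auto
  then show ?thesis
  proof cases
    case 1
    then show ?thesis
      using sums permutes_id [of "{1..4::nat}"]
      by (intro exI [of _ id]) (simp add: nf_mult_4 nf_eq_one K_def)
  next
    case 2
    then show ?thesis
      using sums permutes_swap_id [of 2 "{1..4::nat}" 3]
      by (intro exI [of _ "transpose 2 3"]) (simp add: transpose_def nf_mult_4 nf_eq_one K_def ac_simps)
  next
    case 3
    then show ?thesis
      using sums permutes_swap_id [of 1 "{1..4::nat}" 4]
      by (intro exI [of _ "transpose 1 4"]) (simp add: transpose_def nf_mult_4 nf_eq_one K_def ac_simps)
  qed
qed

lemma reordered_product_eq_one:
  fixes g :: "nat \<Rightarrow> 'a"
  assumes g: "\<forall>n \<in> {1..4}. g n \<in> carrier G - center G" and u: "u \<in> center G"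
    and z13: "zclass G (g 1) \<noteq> zclass G (g 3)"
    and z12: "g 1 \<otimes> g 2 \<in> center G" and z34: "g 3 \<otimes> g 4 \<in> center G"
  shows "\<exists>\<sigma>. \<sigma> permutes {1..4} \<and> g (\<sigma> 1) \<otimes> g (\<sigma> 2) \<otimes> g (\<sigma> 3) \<otimes> g (\<sigma> 4) \<otimes> u = \<one>"
proof -
  have gc: "g 1 \<in> carrier G" "g 2 \<in> carrier G" "g 3 \<in> carrier G" "g 4 \<in> carrier G"
    using g by auto
  have g_nf: "g n = nf (ea (g n)) (eb (g n)) (ec (g n))" if "n \<in> {1..4}" for n
    using g that nf_coords by auto
  have u_nf: "u = nf 0 0 (ec u)"
    using u nf_coords [of u] by (simp add: center_iff_coords)
  have "\<not> parallel3 (ea (g 1)) (eb (g 1)) (ea (g 3)) (eb (g 3))"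
    using noncommuting_if_zclass_ne [of "g 1" "g 3"] commute_iff_parallel [of "g 1" "g 3"] g z13
    by auto
  moreover have "(ea (g 1) + ea (g 2)) mod 3 = 0" "(eb (g 1) + eb (g 2)) mod 3 = 0"
    "(ea (g 3) + ea (g 4)) mod 3 = 0" "(eb (g 3) + eb (g 4)) mod 3 = 0"
    using z12 z34 coords_mult [OF gc(1,2)] coords_mult [OF gc(3,4)] by (simp_all add: center_iff_coords)
  ultimately obtain \<sigma> where \<sigma>: "\<sigma> permutes {1..4}"
    and "nf (ea (g (\<sigma> 1))) (eb (g (\<sigma> 1))) (ec (g (\<sigma> 1))) \<otimes> nf (ea (g (\<sigma> 2))) (eb (g (\<sigma> 2))) (ec (g (\<sigma> 2))) \<otimes>
      nf (ea (g (\<sigma> 3))) (eb (g (\<sigma> 3))) (ec (g (\<sigma> 3))) \<otimes> nf (ea (g (\<sigma> 4))) (eb (g (\<sigma> 4))) (ec (g (\<sigma> 4))) \<otimes>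
      nf 0 0 (ec u) = \<one>"
    using nf_reordered_product_eq_one [of "ea \<circ> g" "eb \<circ> g" "ec \<circ> g" "ec u"] coords_less gc by auto
  moreover have "\<sigma> n \<in> {1..4}" if "n \<in> {1..4}" for n
    using permutes_in_image [OF \<sigma>] that by simp
  ultimately show ?thesis
    using g_nf u_nf by (intro exI [of _ \<sigma>]) simp
qed

end

theorem lemma3p4:
  fixes G :: "('a, 'b) monoid_scheme"
  assumes "group G"
    and "card (carrier G) = 27"
    and "\<forall>x \<in> carrier G. x [^]\<^bsub>G\<^esub> (3::nat) = \<one>\<^bsub>G\<^esub>"
    and "\<exists>x \<in> carrier G. \<exists>y \<in> carrier G. x \<otimes>\<^bsub>G\<^esub> y \<noteq> y \<otimes>\<^bsub>G\<^esub> x"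
  shows
    "(\<forall>U1 U2. short3 G U1 \<and> short3 G U2 \<and> \<not> central_type G U1 \<and> \<not> central_type G U2 \<and>
        card (nc_zclasses G (U1 + U2)) = 4 \<longrightarrow> EGZ G (U1 + U2))
   \<and> (\<forall>U1 U2. short3 G U1 \<and> short3 G U2 \<and> \<not> central_type G U1 \<and> \<not> central_type G U2 \<and>
        card (nc_zclasses G (U1 + U2)) \<ge> 2 \<and> (thick_type G U1 \<or> thick_type G U2)
        \<longrightarrow> EGZ G (U1 + U2))
   \<and> (\<forall>g :: nat \<Rightarrow> 'a. \<forall>u.
        (\<forall>i \<in> {1..4}. g i \<in> carrier G - center G) \<and> u \<in> center G \<and>
        zclass G (g 1) \<noteq> zclass G (g 3) \<and>
        g 1 \<otimes>\<^bsub>G\<^esub> g 2 \<in> center G \<and> g 3 \<otimes>\<^bsub>G\<^esub> g 4 \<in> center G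
        \<longrightarrow> (\<exists>\<sigma>. \<sigma> permutes {1..4} \<and>
              g (\<sigma> 1) \<otimes>\<^bsub>G\<^esub> g (\<sigma> 2) \<otimes>\<^bsub>G\<^esub> g (\<sigma> 3) \<otimes>\<^bsub>G\<^esub> g (\<sigma> 4) \<otimes>\<^bsub>G\<^esub> u = \<one>\<^bsub>G\<^esub>))"
proof -
  obtain x y where "x \<in> carrier G" "y \<in> carrier G" "x \<otimes>\<^bsub>G\<^esub> y \<noteq> y \<otimes>\<^bsub>G\<^esub> x"
    using assms(4) by blast
  then interpret H: heisenberg27 G x y
    by (intro heisenberg27.intro exponent3_pair.intro exponent3_group.intro assms(1)
        exponent3_group_axioms.intro exponent3_pair_axioms.intro heisenberg27_axioms.intro)
      (use assms(2,3) in auto)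
  show ?thesis
    apply (intro conjI)
    subgoal using H.EGZ_four_zclasses by blast
    subgoal using H.EGZ_some_thick by blast
    subgoal using H.reordered_product_eq_one by blast
    done
qed

end
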